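(* For integers $n\ge 1$ and $t\ge 1$ let $c_n(-2,t)=(-1)^{n+t}\frac{2n}{n+t}\binom{n+t}{2t}$ (an integer). Then: (1) if $s\geq 1$, $J\geq 1$, and $n\geq 0$ is even, then $c_n(-2,2^sJ-1)\equiv 0\pmod{2^{s+1}}$; (2) if $J\geq 0$ and $n\not\equiv 13,14\pmod{27}$, then $c_n(-2,27J+13)\equiv 0\pmod 3$; (3) if $J\geq 1$ and $n\not\equiv \pm1\pmod{27}$, then $c_n(-2,27J-1)\equiv 0\pmod 3$.
   Context: In (1), for $n=0$ the formula gives $c_0(-2,t)=0$. Binomial coefficients $\binom{m}{k}$ with $k>m$ are $0$. *)

theory Defs
  imports Complex_Main
begin

text \<open>Integrality is not assumed;
  congruences are stated as "equals an integer multiple of m".\<close>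
definition cm2 :: "nat \<Rightarrow> nat \<Rightarrow> real" where
  "cm2 n t = (-1) ^ (n + t) * (2 * real n / real (n + t)) * real ((n + t) choose (2 * t))"

end

theory Submission
  imports Defs "HOL-Computational_Algebra.Primes"
begin

text \<open>Write \<open>m = n + t\<close>. Absorption, \<open>(m - 2t) C(m,2t) = m C(m-1,2t)\<close>, shows that
  \<open>c\<^sub>n(-2,t) = \<plusminus>(C(m,2t) + C(m-1,2t))\<close> and \<open>m c\<^sub>n(-2,t) = \<plusminus>2n C(m,2t)\<close>. Absorbing once or
  twice more, \<open>j+1\<close> divides \<open>(m+1) C(m,j)\<close> and \<open>(j+1)(j+2)\<close> divides \<open>(m+1)(m+2) C(m,j)\<close>; so if
  a prime power \<open>p\<^sup>k\<close> divides \<open>2t+1\<close> (resp. \<open>(2t+1)(2t+2)\<close>) but not \<open>m+1\<close> (resp. neither of the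
  coprime numbers \<open>m+1\<close>, \<open>m+2\<close>), then \<open>p\<close> divides \<open>C(m,2t)\<close>, and likewise for \<open>C(m-1,2t)\<close>.
  With \<open>p\<^sup>k = 27\<close> this gives (2) and (3): the excluded residues of \<open>n\<close> are exactly those
  putting \<open>27\<close> into one of \<open>m\<close>, \<open>m+1\<close>, \<open>m+2\<close>, except \<open>n \<equiv> 0\<close> in (3), where \<open>3 | n\<close> but
  not \<open>3 | m\<close> settles it through \<open>m c\<^sub>n(-2,t) = \<plusminus>2n C(m,2t)\<close>. In (1), \<open>m\<close> is odd and
  \<open>2\<^sup>s\<^sup>+\<^sup>1 | 2t+2\<close>, hence \<open>2\<^sup>s\<^sup>+\<^sup>1 | (m+1) C(m,2t)\<close>; as \<open>m+1 \<equiv> n (mod 2\<^sup>s)\<close> this yields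
  \<open>2\<^sup>s\<^sup>+\<^sup>1 | 2n C(m,2t) = \<plusminus>m c\<^sub>n(-2,t)\<close>, and \<open>m\<close> is odd.\<close>

definition cm2_abs :: "nat \<Rightarrow> nat \<Rightarrow> nat" where
  "cm2_abs n t = ((n + t) choose (2 * t)) + ((n + t - 1) choose (2 * t))"

lemma cm2_abs_mult_eq: "cm2_abs n t * (n + t) = 2 * n * ((n + t) choose (2 * t))"
proof (cases "2 * t \<le> n + t")
  case True
  define m where "m = n + t"
  have "cm2_abs n t * m = m * (m choose (2 * t)) + m * ((m - 1) choose (2 * t))"
    by (simp add: cm2_abs_def m_def algebra_simps)
  also have "\<dots> = m * (m choose (2 * t)) + (m - 2 * t) * (m choose (2 * t))"
    by (simp add: binomial_absorb_comp)
  also have "\<dots> = 2 * n * (m choose (2 * t))"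
    using True by (simp add: m_def algebra_simps)
  finally show ?thesis
    by (simp add: m_def)
next
  case False
  then show ?thesis
    by (simp add: cm2_abs_def binomial_eq_0)
qed

lemma cm2_eq_sign_times_cm2_abs:
  assumes "0 < n + t"
  shows "cm2 n t = (-1) ^ (n + t) * real (cm2_abs n t)"
proof -
  have "real (cm2_abs n t) * real (n + t) = 2 * real n * real ((n + t) choose (2 * t))"
    by (metis cm2_abs_mult_eq of_nat_mult of_nat_numeral)
  moreover have "real (n + t) \<noteq> 0"
    using assms by linarith
  ultimately have "real (cm2_abs n t) = 2 * real n / real (n + t) * real ((n + t) choose (2 * t))"
    by (simp add: field_simps del: of_nat_add)
  then show ?thesis
    by (simp add: cm2_def)
qed

lemma cm2_int_multiple_if_dvd_cm2_abs:
  assumes "0 < n + t" and "d dvd cm2_abs n t"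
  shows "\<exists>k::int. cm2 n t = of_int (int d * k)"
proof -
  obtain e where "cm2_abs n t = d * e"
    using assms(2) by blast
  then have "cm2 n t = of_int (int d * ((-1) ^ (n + t) * int e))"
    by (simp add: cm2_eq_sign_times_cm2_abs[OF assms(1)])
  then show ?thesis ..
qed

lemma Suc_dvd_Suc_times_binomial: "Suc j dvd Suc m * (m choose j)"
  unfolding Suc_times_binomial_eq by (rule dvd_triv_right)

lemma Suc_Suc_dvd_Suc_Suc_times_binomial:
  "(j + 1) * (j + 2) dvd (m + 1) * (m + 2) * (m choose j)"
proof -
  have "(m + 1) * (m + 2) * (m choose j) = (m + 2) * ((Suc m choose Suc j) * Suc j)"
    by (simp only: Suc_times_binomial_eq[symmetric]) (simp add: algebra_simps del: binomial_Suc_Suc)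
  also have "\<dots> = Suc j * (Suc (Suc m) * (Suc m choose Suc j))"
    by (simp add: algebra_simps del: binomial_Suc_Suc)
  also have "\<dots> = (j + 1) * (j + 2) * (Suc (Suc m) choose Suc (Suc j))"
    by (simp only: Suc_times_binomial_eq) (simp add: algebra_simps del: binomial_Suc_Suc)
  finally show ?thesis
    by (rule dvdI)
qed

lemma prime_dvd_if_prime_power_dvd_mult:
  fixes p :: nat
  assumes "prime p" and "p ^ k dvd a * c" and "\<not> p ^ k dvd a"
  shows "p dvd c"
proof (rule ccontr)
  assume "\<not> p dvd c"
  moreover have "0 < k"
    using assms(3) by (cases k) auto
  ultimately have "p ^ k dvd a"
    using prime_power_dvd_multD[of p k c a] assms(1,2) by (simp add: mult.commute)
  with assms(3) show False ..
qed

lemma prime_power_dvd_mult_Suc: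
  fixes p :: nat
  assumes "prime p" and "p ^ k dvd a * Suc a"
  shows "p ^ k dvd a \<or> p ^ k dvd Suc a"
proof (cases "k = 0")
  case False
  have "\<not> p dvd a \<or> \<not> p dvd Suc a"
  proof (rule ccontr)
    assume "\<not> ?thesis"
    then have "p dvd Suc a - a"
      by (intro dvd_diff_nat) auto
    with assms(1) show False
      by simp
  qed
  moreover have "p ^ k dvd Suc a * a"
    using assms(2) by (simp only: mult.commute)
  ultimately show ?thesis
    using prime_power_dvd_multD[of p k] assms False by blast
qed simp

lemma prime_dvd_binomial_if_power_dvd_Suc:
  fixes p :: nat
  assumes "prime p" and "p ^ k dvd Suc j" and "\<not> p ^ k dvd Suc m"
  shows "p dvd (m choose j)"
  using prime_dvd_if_prime_power_dvd_mult[OF assms(1) _ assms(3)]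
    dvd_trans[OF assms(2) Suc_dvd_Suc_times_binomial] .

lemma prime_dvd_binomial_if_power_dvd_Suc_Suc:
  fixes p :: nat
  assumes "prime p" and "p ^ k dvd (j + 1) * (j + 2)"
    and "\<not> p ^ k dvd m + 1" and "\<not> p ^ k dvd m + 2"
  shows "p dvd (m choose j)"
proof -
  have "\<not> p ^ k dvd (m + 1) * (m + 2)"
    using prime_power_dvd_mult_Suc[OF assms(1), of k "m + 1"] assms(3,4) by auto
  then show ?thesis
    using prime_dvd_if_prime_power_dvd_mult[OF assms(1)]
      dvd_trans[OF assms(2) Suc_Suc_dvd_Suc_Suc_times_binomial] by blast
qed

lemma two_power_dvd_cm2_abs:
  assumes "1 \<le> s" and "2 ^ s dvd t + 1" and "even n"
  shows "2 ^ (s + 1) dvd cm2_abs n t"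
proof -
  define m where "m = n + t"
  define C where "C = m choose (2 * t)"
  have "2 dvd (2::nat) ^ s"
    using assms(1) by (simp add: dvd_power)
  then have "even (t + 1)"
    using assms(2) by (rule dvd_trans)
  then have odd_m: "odd m"
    using assms(3) by (simp add: m_def)
  have "2 ^ (s + 1) dvd 2 * (t + 1)"
    using mult_dvd_mono[OF dvd_refl[of 2] assms(2)] by simp
  moreover have "2 * t + 2 = 2 * (t + 1)"
    by simp
  ultimately have "2 ^ (s + 1) dvd (2 * t + 1) * (2 * t + 2)"
    by (simp only: dvd_mult)
  also have "\<dots> dvd (m + 1) * (m + 2) * C"
    unfolding C_def by (rule Suc_Suc_dvd_Suc_Suc_times_binomial)
  also have "\<dots> = (m + 2) * ((m + 1) * C)"
    by (simp only: ac_simps)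
  finally have "2 ^ (s + 1) dvd (m + 1) * C"
    using coprime_dvd_mult_right_iff[of "2 ^ (s + 1)" "m + 2"] odd_m by simp
  then have "2 ^ s dvd (m + 1) * C"
    by (rule power_le_dvd) simp
  also have "(m + 1) * C = n * C + (t + 1) * C"
    by (simp add: m_def algebra_simps)
  finally have "2 ^ s dvd n * C + (t + 1) * C" .
  moreover have "2 ^ s dvd (t + 1) * C"
    using assms(2) by (rule dvd_mult2)
  ultimately have "2 ^ s dvd n * C"
    by (simp only: dvd_add_left_iff)
  then have "2 ^ (s + 1) dvd cm2_abs n t * m"
    by (simp add: cm2_abs_mult_eq m_def C_def mult.assoc)
  then show ?thesis
    using odd_m by (simp add: coprime_dvd_mult_left_iff)
qed

lemma prime_dvd_cm2_abs_if_power_dvd_Suc_double: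
  fixes p :: nat
  assumes "prime p" and "p ^ k dvd 2 * t + 1"
    and "\<not> p ^ k dvd n + t" and "\<not> p ^ k dvd n + t + 1"
  shows "p dvd cm2_abs n t"
proof -
  have "0 < n + t"
    using assms(3) by (intro Nat.gr0I) simp
  then have "p dvd (n + t - 1) choose (2 * t)"
    using prime_dvd_binomial_if_power_dvd_Suc[of p k "2 * t" "n + t - 1"] assms(1-3) by simp
  moreover have "p dvd (n + t) choose (2 * t)"
    using prime_dvd_binomial_if_power_dvd_Suc[of p k "2 * t" "n + t"] assms(1,2,4) by simp
  ultimately show ?thesis
    by (simp add: cm2_abs_def)
qed

lemma prime_dvd_cm2_abs_if_power_dvd_Suc_Suc_double:
  fixes p :: nat
  assumes "prime p" and "p ^ k dvd (2 * t + 1) * (2 * t + 2)"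
    and "\<not> p ^ k dvd n + t" and "\<not> p ^ k dvd n + t + 1" and "\<not> p ^ k dvd n + t + 2"
  shows "p dvd cm2_abs n t"
proof -
  have "0 < n + t"
    using assms(3) by (intro Nat.gr0I) simp
  then have "p dvd (n + t - 1) choose (2 * t)"
    using prime_dvd_binomial_if_power_dvd_Suc_Suc[OF assms(1,2)] assms(3,4) by simp
  moreover have "p dvd (n + t) choose (2 * t)"
    using prime_dvd_binomial_if_power_dvd_Suc_Suc[OF assms(1,2)] assms(4,5)
    by (simp add: add.assoc)
  ultimately show ?thesis
    by (simp add: cm2_abs_def)
qed

lemma prime_dvd_cm2_abs_if_dvd:
  fixes p :: nat
  assumes "prime p" and "p dvd n" and "\<not> p dvd n + t"
  shows "p dvd cm2_abs n t"
proof -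
  have "p dvd cm2_abs n t * (n + t)"
    using assms(2) by (simp add: cm2_abs_mult_eq)
  then show ?thesis
    using assms(1,3) prime_dvd_mult_iff by blast
qed

lemma cm2_two_power_multiple:
  fixes s J n :: nat
  assumes "s \<ge> 1" "J \<ge> 1" "even n"
  shows "\<exists>k::int. cm2 n (2 ^ s * J - 1) = of_int (2 ^ (s + 1) * k)"
proof -
  define t where "t = 2 ^ s * J - 1"
  have "(2::nat) ^ 1 \<le> 2 ^ s * J"
    using assms(1,2) by (metis mult_le_mono nat_mult_1_right one_le_numeral power_increasing)
  then have "t + 1 = 2 ^ s * J" and "0 < n + t"
    by (simp_all add: t_def)
  then have "2 ^ (s + 1) dvd cm2_abs n t"
    using two_power_dvd_cm2_abs[OF assms(1) _ assms(3)] by simp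
  from cm2_int_multiple_if_dvd_cm2_abs[OF \<open>0 < n + t\<close> this] show ?thesis
    by (simp add: t_def)
qed

lemma cm2_three_multiple_at_27J_plus_13:
  fixes J n :: nat
  assumes "n mod 27 \<noteq> 13" and "n mod 27 \<noteq> 14"
  shows "\<exists>k::int. cm2 n (27 * J + 13) = of_int (3 * k)"
proof -
  define t where "t = 27 * J + 13"
  have "prime (3::nat)" and cube: "(3::nat) ^ 3 = 27"
    by simp_all
  have "27 dvd 2 * t + 1"
    by (rule dvdI[of _ _ "2 * J + 1"]) (simp add: t_def)
  moreover have "\<not> 27 dvd n + t" and "\<not> 27 dvd n + t + 1"
    using assms unfolding t_def by presburger+
  ultimately have "3 dvd cm2_abs n t"
    by (rule prime_dvd_cm2_abs_if_power_dvd_Suc_double[OF \<open>prime 3\<close>, of 3, unfolded cube])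
  then show ?thesis
    using cm2_int_multiple_if_dvd_cm2_abs[of n t 3] by (simp add: t_def)
qed

lemma cm2_three_multiple_at_27J_plus_26:
  fixes J n :: nat
  assumes "n mod 27 \<noteq> 1" and "n mod 27 \<noteq> 26"
  shows "\<exists>k::int. cm2 n (27 * J + 26) = of_int (3 * k)"
proof -
  define t where "t = 27 * J + 26"
  have "prime (3::nat)" and cube: "(3::nat) ^ 3 = 27"
    by simp_all
  have "3 dvd cm2_abs n t"
  proof (cases "n mod 27 = 0")
    case True
    then have "3 dvd n" and "\<not> 3 dvd n + t"
      unfolding t_def by presburger+
    with \<open>prime 3\<close> show ?thesis
      by (rule prime_dvd_cm2_abs_if_dvd)
  next
    case False
    have "27 dvd 2 * t + 2"
      by (rule dvdI[of _ _ "2 * J + 2"]) (simp add: t_def)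
    then have "27 dvd (2 * t + 1) * (2 * t + 2)"
      by (rule dvd_mult)
    moreover have "\<not> 27 dvd n + t" and "\<not> 27 dvd n + t + 1" and "\<not> 27 dvd n + t + 2"
      using False assms unfolding t_def by presburger+
    ultimately show ?thesis
      by (rule prime_dvd_cm2_abs_if_power_dvd_Suc_Suc_double[OF \<open>prime 3\<close>, of 3, unfolded cube])
  qed
  then show ?thesis
    using cm2_int_multiple_if_dvd_cm2_abs[of n t 3] by (simp add: t_def)
qed

theorem mainTheorem9:
  shows "(\<forall>s J n :: nat. s \<ge> 1 \<longrightarrow> J \<ge> 1 \<longrightarrow> even n \<longrightarrow>
            (\<exists>k::int. cm2 n (2 ^ s * J - 1) = of_int (2 ^ (s + 1) * k)))
       \<and> (\<forall>J n :: nat. n mod 27 \<noteq> 13 \<longrightarrow> n mod 27 \<noteq> 14 \<longrightarrow>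
            (\<exists>k::int. cm2 n (27 * J + 13) = of_int (3 * k)))
       \<and> (\<forall>J n :: nat. J \<ge> 1 \<longrightarrow> n mod 27 \<noteq> 1 \<longrightarrow> n mod 27 \<noteq> 26 \<longrightarrow>
            (\<exists>k::int. cm2 n (27 * J - 1) = of_int (3 * k)))"
proof (intro conjI allI impI)
  fix s J n :: nat
  assume "s \<ge> 1" and "J \<ge> 1" and "even n"
  then show "\<exists>k::int. cm2 n (2 ^ s * J - 1) = of_int (2 ^ (s + 1) * k)"
    by (rule cm2_two_power_multiple)
next
  fix J n :: nat
  assume "n mod 27 \<noteq> 13" and "n mod 27 \<noteq> 14"
  then show "\<exists>k::int. cm2 n (27 * J + 13) = of_int (3 * k)"
    by (rule cm2_three_multiple_at_27J_plus_13)
next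
  fix J n :: nat
  assume "J \<ge> 1" and "n mod 27 \<noteq> 1" and "n mod 27 \<noteq> 26"
  moreover have "27 * J - 1 = 27 * (J - 1) + 26"
    using \<open>J \<ge> 1\<close> by simp
  ultimately show "\<exists>k::int. cm2 n (27 * J - 1) = of_int (3 * k)"
    using cm2_three_multiple_at_27J_plus_26[of n "J - 1"] by simp
qed

end
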